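(* Let $f:\mathbb{Z}^n\to\mathbb{R}\cup\{+\infty\}$ be a function satisfying condition (SSQM$^\natural$) with $\arg\min f\neq\emptyset$. Then Algorithm BasicSteepestDescent applied to $f$ finds a minimizer of $f$ in a finite number of iterations.
   Context: $N=\{1,\dots,n\}$. For $i\in N$, $\chi_i\in\{0,1\}^n$ is the characteristic vector of $i$, and $\chi_0=0$. $\mathrm{dom}\,f=\{x\in\mathbb{Z}^n\mid f(x)<+\infty\}$. For $x,y\in\mathbb{Z}^n$, $\mathrm{supp}^+(x-y)=\{i\in N\mid x(i)>y(i)\}$ and $\mathrm{supp}^-(x-y)=\{j\in N\mid x(j)<y(j)\}$. Condition (SSQM$^\natural$): for all $x,y\in\mathrm{dom}\,f$ and all $i\in\mathrm{supp}^+(x-y)$ there exists $j\in\mathrm{supp}^-(x-y)\cup\{0\}$ such that at least one of the following holds: (a) $f(x-\chi_i+\chi_j)<f(x)$; (b) $f(y+\chi_i-\chi_j)<f(y)$; (c) $f(x-\chi_i+\chi_j)=f(x)$ and $f(y+\chi_i-\chi_j)=f(y)$. Algorithm BasicSteepestDescent: Step 0: choose an arbitrary $x_0\in\mathrm{dom}\,f$ and set $x:=x_0$. Step 1: if $f(x-\chi_i+\chi_j)\ge f(x)$ for every $i,j\in N\cup\{0\}$, output $x$ and stop. Step 2: find $i,j\in N\cup\{0\}$ minimizing $f(x-\chi_i+\chi_j)$. Step 3: set $x:=x-\chi_i+\chi_j$ and go to Step 1. *)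

theory Defs
  imports Main "HOL-Library.Extended_Real"
begin

text \<open>Points of Z^n are functions from a finite index type 'n (playing the role of
  N = {1..n}) to int. Indices in N \<union> {0} are represented as 'n option, with None = 0.\<close>

definition chi :: "'n option \<Rightarrow> ('n \<Rightarrow> int)" where
  "chi i = (\<lambda>k. if i = Some k then 1 else 0)"

definition move :: "('n \<Rightarrow> int) \<Rightarrow> 'n option \<Rightarrow> 'n option \<Rightarrow> ('n \<Rightarrow> int)" where
  "move x i j = (\<lambda>k. x k - chi i k + chi j k)"

definition domf :: "(('n \<Rightarrow> int) \<Rightarrow> ereal) \<Rightarrow> ('n \<Rightarrow> int) set" where
  "domf f = {x. f x < \<infinity>}"

definition SSQM_nat :: "(('n \<Rightarrow> int) \<Rightarrow> ereal) \<Rightarrow> bool" where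
  "SSQM_nat f \<longleftrightarrow>
    (\<forall>x\<in>domf f. \<forall>y\<in>domf f. \<forall>i. x i > y i \<longrightarrow>
      (\<exists>j. (j = None \<or> (\<exists>j'. j = Some j' \<and> x j' < y j')) \<and>
        (f (move x (Some i) j) < f x
         \<or> f (move y j (Some i)) < f y
         \<or> (f (move x (Some i) j) = f x \<and> f (move y j (Some i)) = f y))))"

definition bsd_stop :: "(('n \<Rightarrow> int) \<Rightarrow> ereal) \<Rightarrow> ('n \<Rightarrow> int) \<Rightarrow> bool" where
  "bsd_stop f x \<longleftrightarrow> (\<forall>i j. f (move x i j) \<ge> f x)"

definition bsd_step :: "(('n \<Rightarrow> int) \<Rightarrow> ereal) \<Rightarrow> ('n \<Rightarrow> int) \<Rightarrow> ('n \<Rightarrow> int) \<Rightarrow> bool" where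
  "bsd_step f x x' \<longleftrightarrow> \<not> bsd_stop f x \<and>
     (\<exists>i j. x' = move x i j \<and> (\<forall>i' j'. f (move x i j) \<le> f (move x i' j')))"

definition is_minimizer :: "(('n \<Rightarrow> int) \<Rightarrow> ereal) \<Rightarrow> ('n \<Rightarrow> int) \<Rightarrow> bool" where
  "is_minimizer f x \<longleftrightarrow> (\<forall>y. f x \<le> f y)"

end

theory Submission
  imports Defs
begin

text \<open>Let \<open>\<mu>(x)\<close> be the l1-distance from \<open>x\<close> to the set of minimizers of \<open>f\<close>.
  If no unit move \<open>x - \<chi>\<^sub>i + \<chi>\<^sub>j\<close> decreases \<open>f\<close>, then \<open>x\<close> is a minimizer: otherwise
  (SSQM-natural) applied to \<open>x\<close> and a nearest minimizer \<open>y\<close> moves \<open>y\<close> to a minimizer closer to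
  \<open>x\<close>. Each step \<open>x \<mapsto> x' = x - \<chi>\<^sub>i + \<chi>\<^sub>j\<close> of steepest descent decreases \<open>\<mu>\<close>: take a minimizer
  \<open>x\<^sup>*\<close> nearest to \<open>x\<close> and, among those, nearest to \<open>x'\<close>. Applying (SSQM-natural) to \<open>x'\<close>, \<open>x\<^sup>*\<close>
  and the coordinate \<open>i\<close> (resp. \<open>j\<close>) shows that either the step moves towards \<open>x\<^sup>*\<close> in that
  coordinate, or \<open>x\<^sup>*\<close> agrees with \<open>x\<close> there and can be shifted along with the step while
  remaining a minimizer (the tie-break excludes all other outcomes); the two coordinates cannot
  both be of the second kind. In each case some minimizer is closer to \<open>x'\<close> than \<open>x\<^sup>*\<close> is to
  \<open>x\<close>. As \<open>\<mu>\<close> is a natural number, the descent stops, and it stops at a minimizer.\<close>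

lemma move_apply:
  "move x a b k = x k - (if a = Some k then 1 else 0) + (if b = Some k then 1 else 0)"
  by (simp add: move_def chi_def)

lemma move_same [simp]: "move x a a = x"
  by (rule ext) (simp add: move_apply)

lemma move_Some_Some: "move x (Some p) (Some q) = move (move x (Some p) None) None (Some q)"
  by (rule ext) (simp add: move_apply)

lemma move_cancel_decrement: "move (move x (Some p) j) k (Some p) = move x k j"
  by (rule ext) (simp add: move_apply)

lemma move_cancel_increment: "move (move x i (Some q)) (Some q) k = move x i k"
  by (rule ext) (simp add: move_apply)

definition l1_dist :: "('n::finite \<Rightarrow> int) \<Rightarrow> ('n \<Rightarrow> int) \<Rightarrow> int" where
  "l1_dist x y = (\<Sum>k\<in>UNIV. \<bar>x k - y k\<bar>)"

lemma l1_dist_nonneg: "0 \<le> l1_dist x y"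
  unfolding l1_dist_def by (simp add: sum_nonneg)

lemma l1_dist_commute: "l1_dist x y = l1_dist y x"
  unfolding l1_dist_def by (simp add: abs_minus_commute)

lemma l1_dist_update_coordinate:
  fixes x x2 y :: "'n::finite \<Rightarrow> int"
  assumes "\<And>k. k \<noteq> p \<Longrightarrow> x2 k = x k"
  shows "l1_dist x2 y = l1_dist x y - \<bar>x p - y p\<bar> + \<bar>x2 p - y p\<bar>"
proof -
  have split: "l1_dist w y = \<bar>w p - y p\<bar> + (\<Sum>k\<in>UNIV - {p}. \<bar>w k - y k\<bar>)" for w
    unfolding l1_dist_def by (rule sum.remove) auto
  have "(\<Sum>k\<in>UNIV - {p}. \<bar>x2 k - y k\<bar>) = (\<Sum>k\<in>UNIV - {p}. \<bar>x k - y k\<bar>)"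
    using assms by (intro sum.cong) auto
  then show ?thesis
    using split[of x] split[of x2] by simp
qed

lemma l1_dist_minus_chi_left:
  "l1_dist (move x (Some p) None) y = l1_dist x y + (if y p < x p then -1 else 1)"
  by (subst l1_dist_update_coordinate[of p]) (auto simp: move_apply)

lemma l1_dist_plus_chi_left:
  "l1_dist (move x None (Some p)) y = l1_dist x y + (if x p < y p then -1 else 1)"
  by (subst l1_dist_update_coordinate[of p]) (auto simp: move_apply)

lemma l1_dist_minus_chi_right:
  "l1_dist x (move y (Some p) None) = l1_dist x y + (if x p < y p then -1 else 1)"
  using l1_dist_minus_chi_left[of y p x] by (simp add: l1_dist_commute)

lemma l1_dist_plus_chi_right:
  "l1_dist x (move y None (Some p)) = l1_dist x y + (if y p < x p then -1 else 1)"
  using l1_dist_plus_chi_left[of y p x] by (simp add: l1_dist_commute)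

lemmas l1_dist_move =
  l1_dist_minus_chi_left l1_dist_plus_chi_left l1_dist_minus_chi_right l1_dist_plus_chi_right

definition l1_nearest :: "(('n::finite \<Rightarrow> int) \<Rightarrow> bool) \<Rightarrow> ('n \<Rightarrow> int) \<Rightarrow> ('n \<Rightarrow> int) \<Rightarrow> bool" where
  "l1_nearest P x y \<longleftrightarrow> P y \<and> (\<forall>z. P z \<longrightarrow> l1_dist x y \<le> l1_dist x z)"

lemma ex_l1_nearest:
  assumes "P y0"
  shows "\<exists>y. l1_nearest P x y"
proof -
  obtain y where "P y" and "\<forall>z. P z \<longrightarrow> nat (l1_dist x y) \<le> nat (l1_dist x z)"
    using ex_has_least_nat[of P y0 "\<lambda>y. nat (l1_dist x y)"] assms by blast
  then show ?thesis
    unfolding l1_nearest_def by (metis l1_dist_nonneg nat_le_eq_zle)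
qed

lemma l1_nearest_tie_break:
  assumes "l1_nearest (l1_nearest P x) x' y" and "P z" and "l1_dist x z \<le> l1_dist x y"
  shows "l1_dist x' y \<le> l1_dist x' z"
proof -
  have "l1_nearest P x z"
    using assms unfolding l1_nearest_def by fastforce
  then show ?thesis
    using assms(1) unfolding l1_nearest_def by blast
qed

lemma SSQM_natE:
  assumes "SSQM_nat f" and "x \<in> domf f" and "y \<in> domf f" and "y p < x p"
  obtains k where "k = None \<or> (\<exists>r. k = Some r \<and> x r < y r)"
    and "f (move x (Some p) k) < f x \<or> f (move y k (Some p)) < f y
      \<or> (f (move x (Some p) k) = f x \<and> f (move y k (Some p)) = f y)"
  using assms unfolding SSQM_nat_def by blast

lemma domf_if_less: "f y < f x \<Longrightarrow> y \<in> domf f"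
  unfolding domf_def using ereal_less_eq(1) less_le_trans by blast

lemma minimizer_dom: "is_minimizer f y \<Longrightarrow> x \<in> domf f \<Longrightarrow> y \<in> domf f"
  unfolding is_minimizer_def domf_def by (auto intro: le_less_trans)

lemma minimizer_exchange_below:
  assumes ssqm: "SSQM_nat f" and y: "is_minimizer f y" and x: "x \<in> domf f" and "x p < y p"
  obtains k where "k = None \<or> (\<exists>r. k = Some r \<and> y r < x r)"
    and "f (move x k (Some p)) < f x
      \<or> (f (move x k (Some p)) = f x \<and> is_minimizer f (move y (Some p) k))"
    and "l1_dist x (move y (Some p) k) < l1_dist x y"
proof -
  obtain k where k: "k = None \<or> (\<exists>r. k = Some r \<and> y r < x r)"
    and alt: "f (move y (Some p) k) < f y \<or> f (move x k (Some p)) < f x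
      \<or> (f (move y (Some p) k) = f y \<and> f (move x k (Some p)) = f x)"
    using SSQM_natE[OF ssqm minimizer_dom[OF y x] x \<open>x p < y p\<close>] by blast
  have "\<not> f (move y (Some p) k) < f y"
    using y by (simp add: is_minimizer_def not_less)
  with alt y have "f (move x k (Some p)) < f x
      \<or> (f (move x k (Some p)) = f x \<and> is_minimizer f (move y (Some p) k))"
    by (auto simp: is_minimizer_def)
  moreover have "l1_dist x (move y (Some p) k) < l1_dist x y"
    using k \<open>x p < y p\<close> by (auto simp: move_Some_Some l1_dist_move move_apply)
  ultimately show thesis
    using k that by blast
qed

lemma minimizer_exchange_above:
  assumes ssqm: "SSQM_nat f" and y: "is_minimizer f y" and x: "x \<in> domf f" and "y p < x p"
  obtains k where "k = None \<or> (\<exists>r. k = Some r \<and> x r < y r)"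
    and "f (move x (Some p) k) < f x
      \<or> (f (move x (Some p) k) = f x \<and> is_minimizer f (move y k (Some p)))"
    and "l1_dist x (move y k (Some p)) < l1_dist x y"
proof -
  obtain k where k: "k = None \<or> (\<exists>r. k = Some r \<and> x r < y r)"
    and alt: "f (move x (Some p) k) < f x \<or> f (move y k (Some p)) < f y
      \<or> (f (move x (Some p) k) = f x \<and> f (move y k (Some p)) = f y)"
    using SSQM_natE[OF ssqm x minimizer_dom[OF y x] \<open>y p < x p\<close>] by blast
  have "\<not> f (move y k (Some p)) < f y"
    using y by (simp add: is_minimizer_def not_less)
  with alt y have "f (move x (Some p) k) < f x
      \<or> (f (move x (Some p) k) = f x \<and> is_minimizer f (move y k (Some p)))"
    by (auto simp: is_minimizer_def)
  moreover have "l1_dist x (move y k (Some p)) < l1_dist x y"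
    using k \<open>y p < x p\<close> by (auto simp: move_Some_Some l1_dist_move move_apply)
  ultimately show thesis
    using k that by blast
qed

lemma bsd_stop_imp_minimizer:
  fixes f :: "('n::finite \<Rightarrow> int) \<Rightarrow> ereal"
  assumes ssqm: "SSQM_nat f" and x: "x \<in> domf f" and stop: "bsd_stop f x"
    and "is_minimizer f y0"
  shows "is_minimizer f x"
proof (rule ccontr)
  assume not_min: "\<not> is_minimizer f x"
  obtain y where y: "l1_nearest (is_minimizer f) x y"
    using ex_l1_nearest \<open>is_minimizer f y0\<close> by blast
  then have y_min: "is_minimizer f y"
    by (simp add: l1_nearest_def)
  with not_min obtain p where "x p \<noteq> y p"
    by (metis ext)
  have no_descent: "\<not> f (move x a b) < f x" for a b
    using stop by (simp add: bsd_stop_def not_less)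
  have "\<exists>z. is_minimizer f z \<and> l1_dist x z < l1_dist x y"
  proof (cases "x p < y p")
    case True
    then show ?thesis
      using no_descent by (elim minimizer_exchange_below[OF ssqm y_min x]) blast+
  next
    case False
    with \<open>x p \<noteq> y p\<close> have "y p < x p"
      by simp
    then show ?thesis
      using no_descent by (elim minimizer_exchange_above[OF ssqm y_min x]) blast+
  qed
  with y show False
    unfolding l1_nearest_def by (meson not_le)
qed

lemma SSQM_nat_decrement_still_descends:
  assumes ssqm: "SSQM_nat f" and dec: "f (move x (Some p) None) < f x"
    and inc_dom: "move x None (Some q) \<in> domf f"
  shows "f (move x (Some p) (Some q)) < f (move x None (Some q))"
proof -
  let ?A = "move x (Some p) None" and ?B = "move x None (Some q)"
  have "?A p < ?B p"
    by (simp add: move_apply)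
  then obtain k where k: "k = None \<or> (\<exists>r. k = Some r \<and> ?B r < ?A r)"
    and alt: "f (move ?B (Some p) k) < f ?B \<or> f (move ?A k (Some p)) < f ?A
      \<or> (f (move ?B (Some p) k) = f ?B \<and> f (move ?A k (Some p)) = f ?A)"
    using SSQM_natE[OF ssqm inc_dom domf_if_less[where f = f, OF dec], of p] by blast
  from k have "k = None"
    by (auto simp: move_apply split: if_split_asm)
  moreover have "move ?A None (Some p) = x" and "move ?B (Some p) None = move x (Some p) (Some q)"
    by (rule ext, simp add: move_apply)+
  ultimately show ?thesis
    using alt dec by fastforce
qed

locale steepest_move =
  fixes f :: "('n::finite \<Rightarrow> int) \<Rightarrow> ereal" and x :: "'n \<Rightarrow> int" and i j :: "'n option"
  assumes ssqm: "SSQM_nat f"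
    and steepest: "\<And>a b. f (move x i j) \<le> f (move x a b)"
    and descent: "f (move x i j) < f x"
begin

abbreviation x' :: "'n \<Rightarrow> int" where
  "x' \<equiv> move x i j"

lemma x'_domf: "x' \<in> domf f"
  using domf_if_less[where f = f, OF descent] .

lemma i_neq_j: "i \<noteq> j"
  using descent by auto

lemma decrement_not_toward_minimizer:
  assumes xs: "l1_nearest (l1_nearest (is_minimizer f) x) x' xs"
    and i: "i = Some p" and "x p \<le> xs p"
  shows "xs p = x p \<and> f (move x None j) = f x' \<and> is_minimizer f (move xs (Some p) None)"
proof -
  have xs_min: "is_minimizer f xs"
    using xs by (simp add: l1_nearest_def)
  have "j \<noteq> Some p"
    using i_neq_j i by simp
  with i \<open>x p \<le> xs p\<close> have "x' p < xs p"
    by (simp add: move_apply)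
  then obtain k where k: "k = None \<or> (\<exists>r. k = Some r \<and> xs r < x' r)"
    and alt: "f (move x' k (Some p)) < f x'
      \<or> (f (move x' k (Some p)) = f x' \<and> is_minimizer f (move xs (Some p) k))"
    and closer: "l1_dist x' (move xs (Some p) k) < l1_dist x' xs"
    using minimizer_exchange_below[OF ssqm xs_min x'_domf] by blast
  have "move x' k (Some p) = move x k j"
    using i by (simp add: move_cancel_decrement)
  with alt steepest[of k j] have fk: "f (move x k j) = f x'"
    and z_min: "is_minimizer f (move xs (Some p) k)"
    using leD by auto
  have "k \<noteq> j"
    using fk descent by auto
  have farther: "l1_dist x xs < l1_dist x (move xs (Some p) k)"
    using l1_nearest_tie_break[OF xs z_min] closer by force
  from k show ?thesis
  proof
    assume "k = None"
    with farther \<open>x p \<le> xs p\<close> have "xs p = x p"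
      by (auto simp: l1_dist_minus_chi_right split: if_splits)
    with \<open>k = None\<close> fk z_min show ?thesis
      by simp
  next
    assume "\<exists>r. k = Some r \<and> xs r < x' r"
    then obtain r where r: "k = Some r" "xs r < x' r"
      by blast
    have "r \<noteq> p"
      using r(2) \<open>x' p < xs p\<close> by auto
    moreover have "x' r = x r"
      using \<open>r \<noteq> p\<close> \<open>k \<noteq> j\<close> i r(1) by (simp add: move_apply)
    ultimately have "l1_dist x (move xs (Some p) k) \<le> l1_dist x xs"
      using r by (simp add: move_Some_Some l1_dist_move move_apply)
    with farther show ?thesis
      by simp
  qed
qed

lemma increment_not_toward_minimizer:
  assumes xs: "l1_nearest (l1_nearest (is_minimizer f) x) x' xs"
    and j: "j = Some q" and "xs q \<le> x q"
  shows "xs q = x q \<and> f (move x i None) = f x' \<and> is_minimizer f (move xs None (Some q))"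
proof -
  have xs_min: "is_minimizer f xs"
    using xs by (simp add: l1_nearest_def)
  have "i \<noteq> Some q"
    using i_neq_j j by simp
  with j \<open>xs q \<le> x q\<close> have "xs q < x' q"
    by (simp add: move_apply)
  then obtain k where k: "k = None \<or> (\<exists>r. k = Some r \<and> x' r < xs r)"
    and alt: "f (move x' (Some q) k) < f x'
      \<or> (f (move x' (Some q) k) = f x' \<and> is_minimizer f (move xs k (Some q)))"
    and closer: "l1_dist x' (move xs k (Some q)) < l1_dist x' xs"
    using minimizer_exchange_above[OF ssqm xs_min x'_domf] by blast
  have "move x' (Some q) k = move x i k"
    using j by (simp add: move_cancel_increment)
  with alt steepest[of i k] have fk: "f (move x i k) = f x'"
    and z_min: "is_minimizer f (move xs k (Some q))"
    using leD by auto
  have "k \<noteq> i"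
    using fk descent by auto
  have farther: "l1_dist x xs < l1_dist x (move xs k (Some q))"
    using l1_nearest_tie_break[OF xs z_min] closer by force
  from k show ?thesis
  proof
    assume "k = None"
    with farther \<open>xs q \<le> x q\<close> have "xs q = x q"
      by (auto simp: l1_dist_plus_chi_right split: if_splits)
    with \<open>k = None\<close> fk z_min show ?thesis
      by simp
  next
    assume "\<exists>r. k = Some r \<and> x' r < xs r"
    then obtain r where r: "k = Some r" "x' r < xs r"
      by blast
    have "r \<noteq> q"
      using r(2) \<open>xs q < x' q\<close> by auto
    moreover have "x' r = x r"
      using \<open>r \<noteq> q\<close> \<open>k \<noteq> i\<close> j r(1) by (simp add: move_apply)
    ultimately have "l1_dist x (move xs k (Some q)) \<le> l1_dist x xs"
      using r by (simp add: move_Some_Some l1_dist_move move_apply)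
    with farther show ?thesis
      by simp
  qed
qed

lemma ex_minimizer_closer_after_step:
  assumes xs: "l1_nearest (l1_nearest (is_minimizer f) x) x' xs"
  shows "\<exists>z. is_minimizer f z \<and> l1_dist x' z < l1_dist x xs"
proof -
  have xs_min: "is_minimizer f xs"
    using xs by (simp add: l1_nearest_def)
  consider (dec) p where "i = Some p" "j = None"
    | (inc) q where "i = None" "j = Some q"
    | (exch) p q where "i = Some p" "j = Some q" "p \<noteq> q"
    using i_neq_j by (cases i; cases j) auto
  then show ?thesis
  proof cases
    case dec
    with decrement_not_toward_minimizer[OF xs] descent have "xs p < x p"
      by fastforce
    with dec xs_min show ?thesis
      by (auto simp: l1_dist_minus_chi_left intro!: exI[of _ xs])
  next
    case inc
    with increment_not_toward_minimizer[OF xs] descent have "x q < xs q"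
      by fastforce
    with inc xs_min show ?thesis
      by (auto simp: l1_dist_plus_chi_left intro!: exI[of _ xs])
  next
    case exch
    consider (both) "x p \<le> xs p" "xs q \<le> x q" | (dec_only) "x p \<le> xs p" "x q < xs q"
      | (inc_only) "xs p < x p" "xs q \<le> x q" | (neither) "xs p < x p" "x q < xs q"
      by fastforce
    then show ?thesis
    proof cases
      case both
      then have inc_eq: "f (move x None (Some q)) = f x'"
        and dec_eq: "f (move x (Some p) None) = f x'"
        using decrement_not_toward_minimizer[OF xs exch(1)]
          increment_not_toward_minimizer[OF xs exch(2)] exch
        by auto
      then have "move x None (Some q) \<in> domf f"
        using x'_domf by (simp add: domf_def)
      then have "f x' < f (move x None (Some q))"
        using SSQM_nat_decrement_still_descends[OF ssqm] descent dec_eq exch by fastforce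
      with inc_eq show ?thesis
        by simp
    next
      case dec_only
      with decrement_not_toward_minimizer[OF xs exch(1)]
      have "xs p = x p" and "is_minimizer f (move xs (Some p) None)"
        by auto
      with dec_only exch show ?thesis
        by (auto simp: move_Some_Some l1_dist_move move_apply
            intro!: exI[of _ "move xs (Some p) None"])
    next
      case inc_only
      with increment_not_toward_minimizer[OF xs exch(2)]
      have "xs q = x q" and "is_minimizer f (move xs None (Some q))"
        by auto
      with inc_only exch show ?thesis
        by (auto simp: move_Some_Some l1_dist_move move_apply
            intro!: exI[of _ "move xs None (Some q)"])
    next
      case neither
      with exch xs_min show ?thesis
        by (auto simp: move_Some_Some l1_dist_move move_apply intro!: exI[of _ xs])
    qed
  qed
qed

end

lemma bsd_step_less: "bsd_step f x x' \<Longrightarrow> f x' < f x"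
  unfolding bsd_step_def bsd_stop_def by (auto simp: not_le intro: le_less_trans)

lemma bsd_step_steepest_move:
  assumes "SSQM_nat f" and step: "bsd_step f x x'"
  obtains i j where "x' = move x i j" and "steepest_move f x i j"
proof -
  from step obtain i j where "x' = move x i j" and "\<forall>a b. f (move x i j) \<le> f (move x a b)"
    unfolding bsd_step_def by blast
  with assms bsd_step_less[OF step] show thesis
    using that by (simp add: steepest_move_def)
qed

lemma rtranclp_bsd_step_domf:
  assumes "(bsd_step f)\<^sup>*\<^sup>* x0 x" and "x0 \<in> domf f"
  shows "x \<in> domf f"
  using assms
  by (cases rule: rtranclp.cases) (auto intro: domf_if_less[where f = f, OF bsd_step_less[of f]])

definition argmin_dist :: "(('n::finite \<Rightarrow> int) \<Rightarrow> ereal) \<Rightarrow> ('n \<Rightarrow> int) \<Rightarrow> nat" where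
  "argmin_dist f x = (LEAST d. \<exists>y. is_minimizer f y \<and> d = nat (l1_dist x y))"

lemma argmin_dist_bsd_step_less:
  fixes f :: "('n::finite \<Rightarrow> int) \<Rightarrow> ereal"
  assumes ssqm: "SSQM_nat f" and y0: "is_minimizer f y0" and step: "bsd_step f x x'"
  shows "argmin_dist f x' < argmin_dist f x"
proof -
  obtain i j where x': "x' = move x i j" and st: "steepest_move f x i j"
    using bsd_step_steepest_move[OF ssqm step] by blast
  obtain xs where xs: "l1_nearest (l1_nearest (is_minimizer f) x) x' xs"
    using ex_l1_nearest[of "l1_nearest (is_minimizer f) x"] ex_l1_nearest[of "is_minimizer f", OF y0]
    by blast
  obtain z where z: "is_minimizer f z" and "l1_dist x' z < l1_dist x xs"
    using steepest_move.ex_minimizer_closer_after_step[OF st] xs x' by blast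
  moreover obtain y where "is_minimizer f y" and y: "argmin_dist f x = nat (l1_dist x y)"
    using LeastI_ex[of "\<lambda>d. \<exists>y. is_minimizer f y \<and> d = nat (l1_dist x y)"] y0
    unfolding argmin_dist_def by blast
  moreover have "l1_dist x xs \<le> l1_dist x y"
    using xs \<open>is_minimizer f y\<close> unfolding l1_nearest_def by blast
  moreover have "argmin_dist f x' \<le> nat (l1_dist x' z)"
    unfolding argmin_dist_def using z by (blast intro: Least_le)
  ultimately show ?thesis
    using l1_dist_nonneg[of x' z] by linarith
qed

theorem corollary2p5:
  fixes f :: "('n::finite \<Rightarrow> int) \<Rightarrow> ereal"
    and x0 :: "'n \<Rightarrow> int"
  assumes no_minus_inf: "\<forall>x. f x \<noteq> - \<infinity>"
    and ssqm: "SSQM_nat f"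
    and argmin_ne: "\<exists>x. is_minimizer f x"
    and x0_dom: "x0 \<in> domf f"
  shows "\<not> (\<exists>xs. xs 0 = x0 \<and> (\<forall>k. bsd_step f (xs k) (xs (Suc k))))
       \<and> (\<forall>x. (bsd_step f)\<^sup>*\<^sup>* x0 x \<and> bsd_stop f x \<longrightarrow> is_minimizer f x)"
proof
  obtain y0 where y0: "is_minimizer f y0"
    using argmin_ne by blast
  show "\<not> (\<exists>xs. xs 0 = x0 \<and> (\<forall>k. bsd_step f (xs k) (xs (Suc k))))"
  proof
    assume "\<exists>xs. xs 0 = x0 \<and> (\<forall>k. bsd_step f (xs k) (xs (Suc k)))"
    then obtain xs where "\<forall>k. (xs (Suc k), xs k) \<in> measure (argmin_dist f)"
      using argmin_dist_bsd_step_less[OF ssqm y0] by auto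
    then show False
      using wf_measure[of "argmin_dist f", unfolded wf_iff_no_infinite_down_chain] by blast
  qed
  show "\<forall>x. (bsd_step f)\<^sup>*\<^sup>* x0 x \<and> bsd_stop f x \<longrightarrow> is_minimizer f x"
    using bsd_stop_imp_minimizer[OF ssqm _ _ y0] rtranclp_bsd_step_domf x0_dom by blast
qed

end
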